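(* Let $G$ be a connected graph and let $e,f$ be edges of $G$ with $e\,\Theta_G\,f$. Then there exist an endpoint $x$ of $e$ and an endpoint $u$ of $f$ such that $e_{\bar{x}}\,\Theta_{S(G)}\,f_{\bar{u}}$. Moreover, if $G$ is bipartite, then there are two disjoint such pairs $\{e_{\bar{x}},f_{\bar{u}}\}$ of edges of $S(G)$ in relation $\Theta_{S(G)}$.
   Context: For a connected graph $H$ with shortest-path distance $d_H$, two edges $\{x,y\}$ and $\{u,v\}$ of $H$ are in relation $\Theta_H$ if $d_H(x,u)+d_H(y,v)\neq d_H(x,v)+d_H(y,u)$. The full subdivision $S(G)$ is obtained by subdividing every edge of $G$ exactly once; the vertex of $S(G)$ corresponding to a vertex $x$ of $G$ is denoted $\bar{x}$, and the vertex subdividing the edge $\{x,y\}$ is denoted $\overline{xy}$. For $e=\{x,y\}\in E(G)$, $e_{\bar{x}}=\{\bar{x},\overline{xy}\}$ and $e_{\bar{y}}=\{\bar{y},\overline{xy}\}$ are the two edges of $S(G)$ corresponding to $e$. *)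

theory Defs
  imports Main
begin

definition simple_graph :: "'a set \<Rightarrow> 'a set set \<Rightarrow> bool" where
  "simple_graph V E \<longleftrightarrow> (\<forall>e\<in>E. \<exists>x y. x \<in> V \<and> y \<in> V \<and> x \<noteq> y \<and> e = {x, y})"

definition walk :: "'a set set \<Rightarrow> 'a list \<Rightarrow> bool" where
  "walk E xs \<longleftrightarrow> xs \<noteq> [] \<and> (\<forall>i. Suc i < length xs \<longrightarrow> {xs ! i, xs ! Suc i} \<in> E)"

definition walk_betw :: "'a set set \<Rightarrow> 'a \<Rightarrow> 'a list \<Rightarrow> 'a \<Rightarrow> bool" where
  "walk_betw E x xs y \<longleftrightarrow> walk E xs \<and> hd xs = x \<and> last xs = y"

definition connected_graph :: "'a set \<Rightarrow> 'a set set \<Rightarrow> bool" where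
  "connected_graph V E \<longleftrightarrow> V \<noteq> {} \<and> (\<forall>x\<in>V. \<forall>y\<in>V. \<exists>xs. walk_betw E x xs y)"

definition gdist :: "'a set set \<Rightarrow> 'a \<Rightarrow> 'a \<Rightarrow> nat" where
  "gdist E x y = (LEAST n. \<exists>xs. walk_betw E x xs y \<and> length xs = Suc n)"

definition Theta :: "'a set set \<Rightarrow> 'a set \<Rightarrow> 'a set \<Rightarrow> bool" where
  "Theta E e f \<longleftrightarrow> (\<exists>x y u v. e = {x, y} \<and> f = {u, v} \<and>
     gdist E x u + gdist E y v \<noteq> gdist E x v + gdist E y u)"

definition bipartite :: "'a set \<Rightarrow> 'a set set \<Rightarrow> bool" where
  "bipartite V E \<longleftrightarrow> (\<exists>A \<subseteq> V. \<forall>e\<in>E. card (e \<inter> A) = 1)"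

(* Full subdivision S(G): vertex Inl x is \<bar>x, vertex Inr {x,y} subdivides edge {x,y} *)
definition subdiv_V :: "'a set \<Rightarrow> 'a set set \<Rightarrow> ('a + 'a set) set" where
  "subdiv_V V E = Inl ` V \<union> Inr ` E"

definition subdiv_E :: "'a set set \<Rightarrow> ('a + 'a set) set set" where
  "subdiv_E E = {{Inl x, Inr e} | x e. e \<in> E \<and> x \<in> e}"

(* e_{\<bar>x} = {\<bar>x, \<bar>(xy)} *)
definition half_edge :: "'a set \<Rightarrow> 'a \<Rightarrow> ('a + 'a set) set" where
  "half_edge e x = {Inl x, Inr e}"

end

theory Submission
  imports Defs
begin

(* In S(G) distances between original vertices double, d(Inl x, Inl u) = 2 d(x, u), and a
   subdivision vertex lies one step beyond the nearer of its two neighbours.  The Theta-defect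
   d(x,u) + d(y,v) - d(x,v) - d(y,u) is additive under subdivision: the defect of Inl x, Inl y
   against Inl u, Inl v in S(G), twice the nonzero defect of e against f in G, is the alternating
   sum of the defects of the four pairs of half-edges, so one of these pairs is in relation Theta.
   In a bipartite graph the distances from a vertex to the two ends of an edge differ by exactly
   one.  Together with e Theta f this forces d(x,u) = d(y,v) = k and d(x,v) = d(y,u) = k + 1 for a
   suitable labelling f = {u,v}, and computing distances in S(G) gives e_x Theta f_v and
   e_y Theta f_u. *)

lemma successively_iff_nth:
  "successively P xs \<longleftrightarrow> (\<forall>i. Suc i < length xs \<longrightarrow> P (xs ! i) (xs ! Suc i))"
proof (induction P xs rule: successively.induct)
  case (3 P x y xs)
  have "(\<forall>i. Suc i < length (x # y # xs) \<longrightarrow> Q i)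
      \<longleftrightarrow> Q 0 \<and> (\<forall>i. Suc i < length (y # xs) \<longrightarrow> Q (Suc i))" for Q
    by (metis One_nat_def Suc_less_eq length_Cons not0_implies_Suc zero_less_Suc)
  then show ?case using 3 by simp
qed simp_all

lemma walk_iff_successively: "walk E xs \<longleftrightarrow> xs \<noteq> [] \<and> successively (\<lambda>a b. {a, b} \<in> E) xs"
  by (simp add: walk_def successively_iff_nth)

lemma walk_snoc: "walk E (xs @ [z]) \<longleftrightarrow> xs = [] \<or> walk E xs \<and> {last xs, z} \<in> E"
  by (auto simp: walk_iff_successively successively_append_iff)

lemma walk_betw_append:
  assumes "walk_betw E a xs b" and "walk_betw E b ys c"
  shows "walk_betw E a (xs @ tl ys) c"
  using assms
  by (cases ys) (auto simp: walk_betw_def walk_iff_successively successively_append_iff successively_Cons)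

lemma walk_betw_rev: "walk_betw E a xs b \<Longrightarrow> walk_betw E b (rev xs) a"
  by (simp add: walk_betw_def walk_iff_successively hd_rev last_rev insert_commute)

definition reachable :: "'a set set \<Rightarrow> 'a \<Rightarrow> 'a \<Rightarrow> bool" where
  "reachable E a b \<longleftrightarrow> (\<exists>xs. walk_betw E a xs b)"

lemma walk_betw_singleton: "walk_betw E a [a] a"
  by (simp add: walk_betw_def walk_def)

lemma walk_betw_edge: "{a, b} \<in> E \<Longrightarrow> walk_betw E a [a, b] b"
  by (simp add: walk_betw_def walk_iff_successively)

lemma reachable_refl: "reachable E a a"
  using walk_betw_singleton reachable_def by metis

lemma reachable_edge: "{a, b} \<in> E \<Longrightarrow> reachable E a b"
  using walk_betw_edge reachable_def by metis

lemma reachable_sym: "reachable E a b \<Longrightarrow> reachable E b a"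
  using walk_betw_rev reachable_def by metis

lemma reachable_trans: "reachable E a b \<Longrightarrow> reachable E b c \<Longrightarrow> reachable E a c"
  using walk_betw_append reachable_def by metis

lemma connected_graph_reachable:
  "connected_graph V E \<Longrightarrow> a \<in> V \<Longrightarrow> b \<in> V \<Longrightarrow> reachable E a b"
  by (simp add: connected_graph_def reachable_def)

lemma walk_betw_nonempty: "walk_betw E a xs b \<Longrightarrow> xs \<noteq> []"
  by (simp add: walk_betw_def walk_def)

lemma gdist_less_length:
  assumes "walk_betw E a xs b"
  shows "gdist E a b < length xs"
proof -
  have "length xs = Suc (length xs - 1)"
    using walk_betw_nonempty[OF assms] by simp
  then have "gdist E a b \<le> length xs - 1"
    unfolding gdist_def using assms by (intro Least_le) blast
  then show ?thesis using walk_betw_nonempty[OF assms] by (cases xs) auto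
qed

lemma gdist_shortest_walk:
  assumes "reachable E a b"
  obtains xs where "walk_betw E a xs b" and "length xs = Suc (gdist E a b)"
proof -
  from assms obtain xs where "walk_betw E a xs b" unfolding reachable_def by blast
  moreover have "length xs = Suc (length xs - 1)"
    using walk_betw_nonempty[OF \<open>walk_betw E a xs b\<close>] by simp
  ultimately have "\<exists>xs'. walk_betw E a xs' b \<and> length xs' = Suc (length xs - 1)"
    by blast
  then have "\<exists>xs'. walk_betw E a xs' b \<and> length xs' = Suc (gdist E a b)"
    unfolding gdist_def by (rule LeastI)
  then show thesis using that by blast
qed

lemma gdist_commute: "gdist E a b = gdist E b a"
  unfolding gdist_def by (metis length_rev walk_betw_rev)

lemma gdist_self [simp]: "gdist E a a = 0"
  using gdist_less_length[OF walk_betw_singleton] by simp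

lemma gdist_eq_0_iff:
  assumes "reachable E a b"
  shows "gdist E a b = 0 \<longleftrightarrow> a = b"
proof
  assume "gdist E a b = 0"
  with assms obtain xs where "walk_betw E a xs b" and "length xs = 1"
    by (metis One_nat_def gdist_shortest_walk)
  then show "a = b" by (auto simp: walk_betw_def length_Suc_conv)
qed simp

lemma gdist_triangle:
  assumes "reachable E a b" and "reachable E b c"
  shows "gdist E a c \<le> gdist E a b + gdist E b c"
proof -
  obtain xs ys where xs: "walk_betw E a xs b" "length xs = Suc (gdist E a b)"
    and ys: "walk_betw E b ys c" "length ys = Suc (gdist E b c)"
    using assms by (metis gdist_shortest_walk)
  have "gdist E a c < length (xs @ tl ys)"
    using walk_betw_append[OF xs(1) ys(1)] by (rule gdist_less_length)
  then show ?thesis using xs(2) ys(2) by simp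
qed

lemma gdist_le_adjacent:
  assumes "reachable E a b" and "{b, c} \<in> E"
  shows "gdist E a c \<le> gdist E a b + 1"
  using gdist_triangle[OF assms(1) reachable_edge[OF assms(2)]]
    gdist_less_length[OF walk_betw_edge[OF assms(2)]] by simp

lemma gdist_last_step:
  assumes "reachable E a b" and "a \<noteq> b"
  obtains c where "{c, b} \<in> E" and "reachable E a c" and "gdist E a b = gdist E a c + 1"
proof -
  obtain xs where xs: "walk_betw E a xs b" "length xs = Suc (gdist E a b)"
    using assms(1) by (rule gdist_shortest_walk)
  then obtain ys where ys: "xs = ys @ [b]"
    by (metis append_butlast_last_id walk_betw_def walk_def)
  with xs assms(2) have "ys \<noteq> []" by (auto simp: walk_betw_def)
  with xs ys have "walk_betw E a ys (last ys)" and edge: "{last ys, b} \<in> E"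
    by (auto simp: walk_betw_def walk_snoc)
  then have "reachable E a (last ys)" and "gdist E a (last ys) < length ys"
    by (auto simp: reachable_def intro: gdist_less_length)
  moreover have "gdist E a b \<le> gdist E a (last ys) + 1"
    using gdist_le_adjacent[OF \<open>reachable E a (last ys)\<close> edge] .
  ultimately show thesis using that edge xs(2) ys by fastforce
qed

lemma simple_graph_edgeE:
  assumes "simple_graph V E" and "e \<in> E"
  obtains x y where "e = {x, y}" and "x \<noteq> y"
  using assms unfolding simple_graph_def by meson

lemma simple_graph_edge_subset: "simple_graph V E \<Longrightarrow> e \<in> E \<Longrightarrow> e \<subseteq> V"
  unfolding simple_graph_def by fastforce

lemma simple_graph_edge_neq: "simple_graph V E \<Longrightarrow> {x, y} \<in> E \<Longrightarrow> x \<noteq> y"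
  unfolding simple_graph_def by (metis doubleton_eq_iff)

lemma simple_graph_edge_eq:
  "simple_graph V E \<Longrightarrow> e \<in> E \<Longrightarrow> x \<in> e \<Longrightarrow> y \<in> e \<Longrightarrow> x \<noteq> y \<Longrightarrow> e = {x, y}"
  unfolding simple_graph_def by fastforce

lemma Theta_doubleton_iff:
  "Theta E {x, y} {u, v} \<longleftrightarrow> gdist E x u + gdist E y v \<noteq> gdist E x v + gdist E y u"
proof
  assume "Theta E {x, y} {u, v}"
  then obtain x' y' u' v' where "{x, y} = {x', y'}" and "{u, v} = {u', v'}"
    and "gdist E x' u' + gdist E y' v' \<noteq> gdist E x' v' + gdist E y' u'"
    unfolding Theta_def by blast
  then show "gdist E x u + gdist E y v \<noteq> gdist E x v + gdist E y u"
    unfolding doubleton_eq_iff by (elim disjE conjE) (simp_all add: ac_simps)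
qed (auto simp: Theta_def)

lemma Theta_self:
  assumes "{a, b} \<in> E" and "a \<noteq> b"
  shows "Theta E {a, b} {a, b}"
  using assms gdist_eq_0_iff[OF reachable_edge[OF assms(1)]]
  by (simp add: Theta_doubleton_iff gdist_commute[of E b a])

lemma half_edge_eq_iff: "half_edge e x = half_edge f u \<longleftrightarrow> e = f \<and> x = u"
  unfolding half_edge_def by (auto simp: doubleton_eq_iff)

lemma subdiv_E_iff: "{Inl x, Inr e} \<in> subdiv_E E \<longleftrightarrow> e \<in> E \<and> x \<in> e"
  unfolding subdiv_E_def by (auto simp: doubleton_eq_iff)

lemma subdiv_E_iff': "{Inr e, Inl x} \<in> subdiv_E E \<longleftrightarrow> e \<in> E \<and> x \<in> e"
  by (metis insert_commute subdiv_E_iff)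

lemma subdiv_E_Inr_neighbour:
  assumes "{w, Inr e} \<in> subdiv_E E"
  obtains x where "x \<in> e" and "w = Inl x"
  using assms unfolding subdiv_E_def by (auto simp: doubleton_eq_iff)

lemma subdiv_walk_of_walk:
  assumes "walk E xs"
  shows "\<exists>ws. walk (subdiv_E E) ws \<and> hd ws = Inl (hd xs) \<and> last ws = Inl (last xs)
              \<and> length ws = 2 * length xs - 1"
  using assms
proof (induction xs rule: rev_induct)
  case (snoc z xs)
  show ?case
  proof (cases "xs = []")
    case True
    then show ?thesis by (intro exI[of _ "[Inl z]"]) (simp add: walk_def)
  next
    case False
    with snoc.prems have "walk E xs" and edge: "{last xs, z} \<in> E"
      by (auto simp: walk_snoc)
    then obtain ws where ws: "walk (subdiv_E E) ws" "hd ws = Inl (hd xs)"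
      "last ws = Inl (last xs)" "length ws = 2 * length xs - 1"
      using snoc.IH by blast
    let ?ws' = "ws @ [Inr {last xs, z}, Inl z]"
    have "walk (subdiv_E E) ?ws'"
      using ws(1,3) edge walk_snoc[of "subdiv_E E" "ws @ [Inr {last xs, z}]" "Inl z"]
      by (simp add: walk_snoc subdiv_E_iff subdiv_E_iff')
    moreover have "ws \<noteq> []" using ws(1) by (simp add: walk_def)
    ultimately show ?thesis using ws False by (intro exI[of _ ?ws']) auto
  qed
qed (simp add: walk_def)

lemma reachable_subdiv_Inl:
  assumes "reachable E a b"
  shows "reachable (subdiv_E E) (Inl a) (Inl b)"
proof -
  from assms obtain xs where "walk E xs" "hd xs = a" "last xs = b"
    unfolding reachable_def walk_betw_def by blast
  then show ?thesis
    using subdiv_walk_of_walk unfolding reachable_def walk_betw_def by metis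
qed

lemma connected_graph_subdiv:
  assumes "simple_graph V E" and "connected_graph V E"
  shows "connected_graph (subdiv_V V E) (subdiv_E E)"
proof -
  have Inl_reachable: "\<exists>a\<in>V. reachable (subdiv_E E) w (Inl a)" if "w \<in> subdiv_V V E" for w
  proof (cases w)
    case (Inl a)
    then show ?thesis using that reachable_refl[of "subdiv_E E" w] by (auto simp: subdiv_V_def)
  next
    case (Inr e)
    with that have "e \<in> E" by (auto simp: subdiv_V_def)
    then obtain a where "a \<in> e" using assms(1) by (metis simple_graph_edgeE insertI1)
    then have "a \<in> V" and "{Inr e, Inl a} \<in> subdiv_E E"
      using simple_graph_edge_subset[OF assms(1) \<open>e \<in> E\<close>] \<open>e \<in> E\<close> by (auto simp: subdiv_E_iff')
    then show ?thesis using Inr reachable_edge[of w "Inl a"] by auto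
  qed
  have "reachable (subdiv_E E) w w'" if w: "w \<in> subdiv_V V E" and w': "w' \<in> subdiv_V V E" for w w'
  proof -
    obtain a b where "a \<in> V" "b \<in> V" "reachable (subdiv_E E) w (Inl a)"
      "reachable (subdiv_E E) w' (Inl b)"
      using Inl_reachable[OF w] Inl_reachable[OF w'] by blast
    then show ?thesis
      using reachable_subdiv_Inl connected_graph_reachable[OF assms(2)]
      by (meson reachable_sym reachable_trans)
  qed
  moreover have "subdiv_V V E \<noteq> {}"
    using assms(2) by (auto simp: connected_graph_def subdiv_V_def)
  ultimately show ?thesis unfolding connected_graph_def reachable_def by blast
qed

lemma subdiv_walk_length_ge:
  assumes "simple_graph V E" and "connected_graph V E" and "a \<in> V"
  shows "walk (subdiv_E E) ws \<Longrightarrow> hd ws = Inl a \<Longrightarrow>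
    (\<forall>b. last ws = Inl b \<longrightarrow> 2 * gdist E a b < length ws) \<and>
    (\<forall>e. last ws = Inr e \<longrightarrow> (\<exists>c\<in>e. 2 * gdist E a c + 1 < length ws))"
proof (induction ws rule: rev_induct)
  case (snoc w ws)
  show ?case
  proof (cases "ws = []")
    case True
    then show ?thesis using snoc.prems by simp
  next
    case False
    with snoc.prems have "walk (subdiv_E E) ws" and "hd ws = Inl a"
      and edge: "{last ws, w} \<in> subdiv_E E" by (auto simp: walk_snoc)
    note IH = snoc.IH[OF this(1,2)]
    obtain x e where "e \<in> E" "x \<in> e" and
      "last ws = Inl x \<and> w = Inr e \<or> last ws = Inr e \<and> w = Inl x"
      using edge unfolding subdiv_E_def by (auto simp: doubleton_eq_iff)
    then consider "last ws = Inl x" "w = Inr e" | "last ws = Inr e" "w = Inl x" by blast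
    then show ?thesis
    proof cases
      case 1
      then show ?thesis using IH \<open>x \<in> e\<close> by auto
    next
      case 2
      then obtain c where "c \<in> e" and c: "2 * gdist E a c + 1 < length ws" using IH by blast
      have "gdist E a x \<le> gdist E a c + 1"
      proof (cases "c = x")
        case False
        then have "{c, x} \<in> E"
          using simple_graph_edge_eq[OF assms(1) \<open>e \<in> E\<close> \<open>c \<in> e\<close> \<open>x \<in> e\<close>] \<open>e \<in> E\<close> by simp
        moreover have "reachable E a c"
          using connected_graph_reachable[OF assms(2,3)] simple_graph_edge_subset[OF assms(1)]
            \<open>e \<in> E\<close> \<open>c \<in> e\<close> by blast
        ultimately show ?thesis by (rule gdist_le_adjacent[rotated])
      qed simp
      then show ?thesis using 2 c by simp
    qed
  qed
qed (simp add: walk_def)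

lemma gdist_subdiv_Inl:
  assumes "simple_graph V E" and "connected_graph V E" and "a \<in> V" and "b \<in> V"
  shows "gdist (subdiv_E E) (Inl a) (Inl b) = 2 * gdist E a b"
proof (rule antisym)
  obtain xs where "walk_betw E a xs b" and xs: "length xs = Suc (gdist E a b)"
    using connected_graph_reachable[OF assms(2-4)] by (rule gdist_shortest_walk)
  then obtain ws where "walk_betw (subdiv_E E) (Inl a) ws (Inl b)" and "length ws = 2 * length xs - 1"
    using subdiv_walk_of_walk unfolding walk_betw_def by metis
  then show "gdist (subdiv_E E) (Inl a) (Inl b) \<le> 2 * gdist E a b"
    using gdist_less_length xs by fastforce
next
  obtain ws where "walk_betw (subdiv_E E) (Inl a) ws (Inl b)"
    and ws: "length ws = Suc (gdist (subdiv_E E) (Inl a) (Inl b))"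
    using reachable_subdiv_Inl[OF connected_graph_reachable[OF assms(2-4)]]
    by (rule gdist_shortest_walk)
  then have "2 * gdist E a b < length ws"
    using subdiv_walk_length_ge[OF assms(1-3)] unfolding walk_betw_def by blast
  then show "2 * gdist E a b \<le> gdist (subdiv_E E) (Inl a) (Inl b)" using ws by simp
qed

lemma gdist_subdiv_Inr:
  assumes "{u, v} \<in> E" and "reachable (subdiv_E E) w (Inl u)" and "w \<noteq> Inr {u, v}"
  shows "gdist (subdiv_E E) w (Inr {u, v}) =
    min (gdist (subdiv_E E) w (Inl u)) (gdist (subdiv_E E) w (Inl v)) + 1"
proof -
  let ?S = "subdiv_E E" and ?f = "Inr {u, v}"
  have edges: "{Inl u, ?f} \<in> ?S" "{Inl v, ?f} \<in> ?S" "{?f, Inl v} \<in> ?S"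
    using assms(1) by (simp_all add: subdiv_E_iff subdiv_E_iff')
  have "reachable ?S w ?f"
    using assms(2) reachable_edge[OF edges(1)] by (rule reachable_trans)
  then have "reachable ?S w (Inl v)"
    using reachable_edge[OF edges(3)] by (rule reachable_trans)
  have le: "gdist ?S w ?f \<le> gdist ?S w (Inl u) + 1" "gdist ?S w ?f \<le> gdist ?S w (Inl v) + 1"
    using gdist_le_adjacent[OF assms(2) edges(1)] gdist_le_adjacent[OF \<open>reachable ?S w (Inl v)\<close> edges(2)]
    by simp_all
  obtain c where c_edge: "{c, ?f} \<in> ?S" and c: "gdist ?S w ?f = gdist ?S w c + 1"
    using gdist_last_step[OF \<open>reachable ?S w ?f\<close> assms(3)] by blast
  from c_edge obtain x where "x \<in> {u, v}" and "c = Inl x" by (rule subdiv_E_Inr_neighbour)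
  then show ?thesis using le c by auto
qed

lemma bipartite_edge_sides:
  assumes "simple_graph V E" and "\<forall>e\<in>E. card (e \<inter> A) = 1" and "{x, y} \<in> E"
  shows "x \<in> A \<longleftrightarrow> y \<notin> A"
proof -
  have "x \<noteq> y" using simple_graph_edge_neq[OF assms(1,3)] .
  moreover have "card ({x, y} \<inter> A) = 1" using assms(2,3) by blast
  ultimately show ?thesis by (cases "x \<in> A"; cases "y \<in> A") auto
qed

lemma bipartite_walk_parity:
  assumes "simple_graph V E" and "\<forall>e\<in>E. card (e \<inter> A) = 1"
  shows "walk E xs \<Longrightarrow> (hd xs \<in> A \<longleftrightarrow> last xs \<in> A) \<longleftrightarrow> odd (length xs)"
proof (induction xs rule: rev_induct)
  case (snoc z xs)
  show ?case
  proof (cases "xs = []")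
    case False
    with snoc.prems have "walk E xs" and "{last xs, z} \<in> E" by (auto simp: walk_snoc)
    then show ?thesis
      using snoc.IH bipartite_edge_sides[OF assms] False by (auto simp: hd_append)
  qed simp
qed (simp add: walk_def)

lemma bipartite_gdist_adjacent:
  assumes "simple_graph V E" and "connected_graph V E" and "bipartite V E"
    and "{u, v} \<in> E" and "w \<in> V"
  shows "gdist E w v = gdist E w u + 1 \<or> gdist E w u = gdist E w v + 1"
proof -
  obtain A where A: "\<forall>e\<in>E. card (e \<inter> A) = 1" using assms(3) unfolding bipartite_def by blast
  have uv: "u \<in> V" "v \<in> V" using simple_graph_edge_subset[OF assms(1,4)] by auto
  have parity: "(w \<in> A \<longleftrightarrow> z \<in> A) \<longleftrightarrow> even (gdist E w z)" if z: "z \<in> V" for z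
  proof -
    obtain xs where "walk_betw E w xs z" and "length xs = Suc (gdist E w z)"
      using connected_graph_reachable[OF assms(2,5) z] by (rule gdist_shortest_walk)
    then show ?thesis
      using bipartite_walk_parity[OF assms(1) A, of xs] unfolding walk_betw_def by simp
  qed
  have "even (gdist E w u) \<longleftrightarrow> odd (gdist E w v)"
    using parity[OF uv(1)] parity[OF uv(2)] bipartite_edge_sides[OF assms(1) A assms(4)] by blast
  then have "gdist E w u \<noteq> gdist E w v" by auto
  moreover have "gdist E w v \<le> gdist E w u + 1"
    using connected_graph_reachable[OF assms(2,5) uv(1)] assms(4) by (rule gdist_le_adjacent)
  moreover have "{v, u} \<in> E" using assms(4) by (simp add: insert_commute)
  then have "gdist E w u \<le> gdist E w v + 1"
    using connected_graph_reachable[OF assms(2,5) uv(2)] by (intro gdist_le_adjacent)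
  ultimately show ?thesis by linarith
qed

lemma bipartite_Theta_gdist:
  assumes "simple_graph V E" and "connected_graph V E" and "bipartite V E"
    and "{x, y} \<in> E" and "{u, v} \<in> E" and "Theta E {x, y} {u, v}"
  shows "gdist E y v = gdist E x u \<and> gdist E y u = gdist E x v
    \<and> (gdist E x v = gdist E x u + 1 \<or> gdist E x u = gdist E x v + 1)"
proof -
  have V: "x \<in> V" "y \<in> V" "u \<in> V" "v \<in> V"
    using simple_graph_edge_subset[OF assms(1)] assms(4,5) by auto
  note adjacent = bipartite_gdist_adjacent[OF assms(1-3)]
  have square: "d = a \<and> c = b \<and> (b = a + 1 \<or> a = b + 1)"
    if "b = a + 1 \<or> a = b + 1" "d = c + 1 \<or> c = d + 1" "c = a + 1 \<or> a = c + 1"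
      "d = b + 1 \<or> b = d + 1" "a + d \<noteq> b + c" for a b c d :: nat
    using that by (elim disjE) linarith+
  show ?thesis
  proof (rule square)
    show "gdist E x v = gdist E x u + 1 \<or> gdist E x u = gdist E x v + 1"
      "gdist E y v = gdist E y u + 1 \<or> gdist E y u = gdist E y v + 1"
      using adjacent[OF assms(5) V(1)] adjacent[OF assms(5) V(2)] .
    show "gdist E y u = gdist E x u + 1 \<or> gdist E x u = gdist E y u + 1"
      "gdist E y v = gdist E x v + 1 \<or> gdist E x v = gdist E y v + 1"
      using adjacent[OF assms(4) V(3)] adjacent[OF assms(4) V(4)]
      by (simp_all add: gdist_commute[of E u x] gdist_commute[of E u y]
          gdist_commute[of E v x] gdist_commute[of E v y])
    show "gdist E x u + gdist E y v \<noteq> gdist E x v + gdist E y u"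
      using assms(6) by (simp add: Theta_doubleton_iff)
  qed
qed

lemma Theta_subdiv_half_edge:
  assumes "simple_graph V E" and "connected_graph V E"
    and "e \<in> E" and "f \<in> E" and "Theta E e f"
  shows "\<exists>x\<in>e. \<exists>u\<in>f. Theta (subdiv_E E) (half_edge e x) (half_edge f u)"
proof (rule ccontr)
  let ?S = "subdiv_E E"
  obtain x y u v where e: "e = {x, y}" and f: "f = {u, v}"
    and defect: "gdist E x u + gdist E y v \<noteq> gdist E x v + gdist E y u"
    using assms(5) unfolding Theta_def by blast
  have V: "x \<in> V" "y \<in> V" "u \<in> V" "v \<in> V"
    using simple_graph_edge_subset[OF assms(1)] assms(3,4) e f by auto
  assume "\<not> ?thesis"
  then have "gdist ?S (Inl a) (Inl b) + gdist ?S (Inr e) (Inr f) =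
      gdist ?S (Inl a) (Inr f) + gdist ?S (Inr e) (Inl b)" if "a \<in> e" "b \<in> f" for a b
    using that by (auto simp: half_edge_def Theta_doubleton_iff)
  note no_defect = this[of x u] this[of x v] this[of y u] this[of y v]
  \<comment> \<open>The alternating sum of the four half-edge defects is the defect of
    \<open>Inl x, Inl y\<close> against \<open>Inl u, Inl v\<close>.\<close>
  have "gdist ?S (Inl x) (Inl u) + gdist ?S (Inl y) (Inl v) =
      gdist ?S (Inl x) (Inl v) + gdist ?S (Inl y) (Inl u)"
    using no_defect e f by simp
  then show False
    using defect gdist_subdiv_Inl[OF assms(1,2)] V by simp
qed

lemma Theta_subdiv_half_edge_of_gdist:
  assumes "simple_graph V E" and "connected_graph V E"
    and "{x, y} \<in> E" and "{u, v} \<in> E" and "{x, y} \<noteq> {u, v}"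
    and "gdist E x u = k" and "gdist E y v = k"
    and "gdist E x v = k + 1" and "gdist E y u = k + 1"
  shows "Theta (subdiv_E E) (half_edge {x, y} x) (half_edge {u, v} v)"
proof -
  let ?S = "subdiv_E E" and ?e = "Inr {x, y}" and ?f = "Inr {u, v}"
  have V: "x \<in> V" "y \<in> V" "u \<in> V" "v \<in> V"
    using simple_graph_edge_subset[OF assms(1)] assms(3,4) by auto
  have reachable: "reachable ?S w w'" if "w \<in> subdiv_V V E" "w' \<in> subdiv_V V E" for w w'
    using connected_graph_reachable[OF connected_graph_subdiv[OF assms(1,2)] that] .
  have Inl_Inl: "gdist ?S (Inl a) (Inl b) = 2 * gdist E a b" if "a \<in> V" "b \<in> V" for a b
    using gdist_subdiv_Inl[OF assms(1,2) that] .
  have xf: "gdist ?S (Inl x) ?f = 2 * k + 1"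
    using gdist_subdiv_Inr[OF assms(4) reachable, of "Inl x"] V assms(6,8)
    by (simp add: subdiv_V_def Inl_Inl)
  have ue: "gdist ?S (Inl u) ?e = 2 * k + 1"
    using gdist_subdiv_Inr[OF assms(3) reachable, of "Inl u"] V assms(6,9)
    by (simp add: subdiv_V_def Inl_Inl gdist_commute[of E u x] gdist_commute[of E u y])
  have ve: "gdist ?S (Inl v) ?e = 2 * k + 1"
    using gdist_subdiv_Inr[OF assms(3) reachable, of "Inl v"] V assms(7,8)
    by (simp add: subdiv_V_def Inl_Inl gdist_commute[of E v x] gdist_commute[of E v y])
  have ev: "gdist ?S ?e (Inl u) = 2 * k + 1" "gdist ?S ?e (Inl v) = 2 * k + 1"
    using ue ve gdist_commute by metis+
  have ef: "gdist ?S ?e ?f = 2 * k + 2"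
    using gdist_subdiv_Inr[OF assms(4) reachable, of ?e] ev V assms(3,5) by (simp add: subdiv_V_def)
  show ?thesis
    using Inl_Inl[OF V(1,4)] assms(8) xf ef ev(2) by (simp add: half_edge_def Theta_doubleton_iff)
qed

lemma Theta_subdiv_disjoint_half_edge_pairs:
  assumes "simple_graph V E" and "connected_graph V E" and "bipartite V E"
    and "e \<in> E" and "f \<in> E" and "e \<noteq> f" and "Theta E e f"
  shows "\<exists>x\<in>e. \<exists>u\<in>f. \<exists>x'\<in>e. \<exists>u'\<in>f.
           Theta (subdiv_E E) (half_edge e x) (half_edge f u)
         \<and> Theta (subdiv_E E) (half_edge e x') (half_edge f u')
         \<and> {half_edge e x, half_edge f u} \<inter> {half_edge e x', half_edge f u'} = {}"
proof -
  obtain x y u' v' where e: "e = {x, y}" and f': "f = {u', v'}"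
    using assms(7) unfolding Theta_def by blast
  have dist: "gdist E y v' = gdist E x u' \<and> gdist E y u' = gdist E x v'
    \<and> (gdist E x v' = gdist E x u' + 1 \<or> gdist E x u' = gdist E x v' + 1)"
    using bipartite_Theta_gdist[OF assms(1-3)] assms(4,5,7) e f' by simp
  obtain u v where f: "f = {u, v}" and "gdist E x v = gdist E x u + 1"
    and "gdist E y u = gdist E x u + 1" and "gdist E y v = gdist E x u"
  proof (cases "gdist E x v' = gdist E x u' + 1")
    case True
    then show thesis using that[OF f'] dist by simp
  next
    case False
    then show thesis using that[of v' u'] f' dist by (simp add: insert_commute)
  qed
  then have "Theta (subdiv_E E) (half_edge e x) (half_edge f v)"
    and "Theta (subdiv_E E) (half_edge e y) (half_edge f u)"
    using Theta_subdiv_half_edge_of_gdist[OF assms(1,2), of x y u v "gdist E x u"]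
      Theta_subdiv_half_edge_of_gdist[OF assms(1,2), of y x v u "gdist E x u"]
      assms(4-6) e f by (simp_all add: insert_commute)
  moreover have "x \<noteq> y" and "u \<noteq> v"
    using simple_graph_edge_neq[OF assms(1)] assms(4,5) e f by auto
  moreover have "{half_edge e x, half_edge f v} \<inter> {half_edge e y, half_edge f u} = {}"
    using \<open>x \<noteq> y\<close> \<open>u \<noteq> v\<close> assms(6) by (auto simp: half_edge_eq_iff)
  ultimately show ?thesis using e f by blast
qed

lemma Theta_subdiv_disjoint_half_edge_pairs_self:
  assumes "simple_graph V E" and "e \<in> E"
  shows "\<exists>x\<in>e. \<exists>u\<in>e. \<exists>x'\<in>e. \<exists>u'\<in>e.
           Theta (subdiv_E E) (half_edge e x) (half_edge e u)
         \<and> Theta (subdiv_E E) (half_edge e x') (half_edge e u')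
         \<and> {half_edge e x, half_edge e u} \<inter> {half_edge e x', half_edge e u'} = {}"
proof -
  obtain x y where e: "e = {x, y}" and "x \<noteq> y"
    using assms by (rule simple_graph_edgeE)
  have "Theta (subdiv_E E) (half_edge e z) (half_edge e z)" if "z \<in> e" for z
    unfolding half_edge_def using assms(2) that by (intro Theta_self) (simp_all add: subdiv_E_iff)
  moreover have "{half_edge e x, half_edge e x} \<inter> {half_edge e y, half_edge e y} = {}"
    using \<open>x \<noteq> y\<close> by (simp add: half_edge_eq_iff)
  ultimately show ?thesis using e by blast
qed

theorem lemma3p3:
  fixes V :: "'a set" and E :: "'a set set" and e f :: "'a set"
  assumes "finite V" and "simple_graph V E" and "connected_graph V E"
    and "e \<in> E" and "f \<in> E" and "Theta E e f"
  shows "(\<exists>x\<in>e. \<exists>u\<in>f. Theta (subdiv_E E) (half_edge e x) (half_edge f u))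
    \<and> (bipartite V E \<longrightarrow>
        (\<exists>x\<in>e. \<exists>u\<in>f. \<exists>x'\<in>e. \<exists>u'\<in>f.
           Theta (subdiv_E E) (half_edge e x) (half_edge f u)
         \<and> Theta (subdiv_E E) (half_edge e x') (half_edge f u')
         \<and> {half_edge e x, half_edge f u} \<inter> {half_edge e x', half_edge f u'} = {}))"
proof (cases "e = f")
  case True
  with Theta_subdiv_half_edge[OF assms(2-6)] Theta_subdiv_disjoint_half_edge_pairs_self[OF assms(2,4)]
  show ?thesis by simp
next
  case False
  with Theta_subdiv_half_edge[OF assms(2-6)]
    Theta_subdiv_disjoint_half_edge_pairs[OF assms(2,3) _ assms(4,5) _ assms(6)]
  show ?thesis by simp
qed

end
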